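(* Let $I_i=[t_i,t_{i+1}]$ with $t_i<t_{i+1}$, let $p\in\mathbb{N}$, and let $\phi_L,\phi,\phi_R:I_i\to\mathbb{R}$ be polynomials of degree at most $p$. Let $m\in\mathbb{N}\cdot p$ (a positive integer multiple of $p$). If $\phi_L(t)\le\phi(t)\le\phi_R(t)$ for all $t\in\mathcal{T}_{i,m}$ and $\sup_{t\in I_i}\{\phi_R(t)-\phi_L(t)\}\le C_{box}$, then for all $t\in I_i$, \[ \phi(t)\ge\phi_L(t)-\frac{\pi^2C_{box}}{8}\sqrt{p}\Big(\frac pm\Big)^2,\qquad \phi(t)\le\phi_R(t)+\frac{\pi^2C_{box}}{8}\sqrt{p}\Big(\frac pm\Big)^2. \]
   Context: $\mathcal{T}_{i,m}$ is the set of Chebyshev–Gauss–Lobatto points of degree $m$ on $I_i$: the images of $\tau_k=-\cos(k\pi/m)$, $k=0,\dots,m$, under the increasing affine map $[-1,1]\to I_i$. $C_{box}$ is a positive constant. *)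

theory Defs
  imports "HOL-Analysis.Analysis" "HOL-Computational_Algebra.Polynomial"
begin

definition cgl_points :: "real \<Rightarrow> real \<Rightarrow> nat \<Rightarrow> real set" where
  "cgl_points a b m =
     {(a + b) / 2 + (b - a) / 2 * (- cos (real k * pi / real m)) | k. k \<le> m}"

end

theory Submission
  imports Defs
begin

(* Subtracting, it suffices to bound from below a polynomial q of degree at most p with
   0 <= q <= C at the Chebyshev-Gauss-Lobatto points. The substitution x = c - h cos y
   turns q into a cosine polynomial g y = (SUM k<=p. a k * cos (k y)) with values in [0, C]
   at the angles i pi / m, i = 0..m. The trapezoidal rule on these angles integrates cos (n y)
   exactly for 0 < n < 2m; the resulting discrete orthogonality, applied to g - C/2, bounds
   the sum of the squares of its coefficients by C^2/2. By Cauchy-Schwarz then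
   g'' <= (SUM k<=p. k^2 |a k|) <= p^2 sqrt p C, and a function with g'' <= M that is
   nonnegative at both ends of an interval of length pi / m stays above -M (pi / m)^2 / 8. *)

lemma lower_bound_if_second_derivative_le:
  fixes g g' g'' :: "real \<Rightarrow> real" and M u v y :: real
  assumes g': "\<And>x. x \<in> {u..v} \<Longrightarrow> (g has_real_derivative g' x) (at x)"
    and g'': "\<And>x. x \<in> {u..v} \<Longrightarrow> (g' has_real_derivative g'' x) (at x)"
    and le_M: "\<And>x. x \<in> {u..v} \<Longrightarrow> g'' x \<le> M"
    and "0 \<le> M" "0 \<le> g u" "0 \<le> g v" and y: "y \<in> {u..v}"
  shows "- M * (v - u)\<^sup>2 / 8 \<le> g y"
proof -
  define k where "k x = M / 2 * ((x - u) * (x - v)) - g x" for x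
  define k' where "k' x = M / 2 * (2 * x - u - v) - g' x" for x
  have k_deriv: "(k has_real_derivative k' x) (at x)" if "x \<in> {u..v}" for x
    unfolding k_def k'_def using g'[OF that]
    by (auto intro!: derivative_eq_intros simp: algebra_simps)
  have k'_mono: "k' x \<le> k' z" if "x \<in> {u..v}" "z \<in> {u..v}" "x \<le> z" for x z
  proof (rule DERIV_nonneg_imp_nondecreasing[OF \<open>x \<le> z\<close>])
    fix w assume "x \<le> w" "w \<le> z"
    then have w: "w \<in> {u..v}" using that by auto
    have "(k' has_real_derivative M - g'' w) (at w)"
      unfolding k'_def using g''[OF w] by (auto intro!: derivative_eq_intros)
    then show "\<exists>d. (k' has_real_derivative d) (at w) \<and> 0 \<le> d"
      using le_M[OF w] by auto
  qed
  have "convex_on {u..v} k"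
    by (rule convex_on_realI[where f' = k']) (use k_deriv k'_mono in auto)
  then have "k y \<le> max (k u) (k v)"
    using convex_on_le_max y by blast
  also have "\<dots> \<le> 0"
    using assms by (simp add: k_def)
  finally have "M / 2 * ((y - u) * (y - v)) \<le> g y"
    by (simp add: k_def)
  moreover have "(y - u) * (v - y) \<le> (v - u)\<^sup>2 / 4"
    using zero_le_power2[of "2 * y - u - v"] by (simp add: power2_eq_square algebra_simps)
  then have "- M * (v - u)\<^sup>2 / 8 \<le> M / 2 * ((y - u) * (y - v))"
    using mult_left_mono[OF _ \<open>0 \<le> M\<close>] by (fastforce simp: algebra_simps)
  ultimately show ?thesis
    by linarith
qed

lemma cos_sum_lower_bound_between:
  fixes a :: "nat \<Rightarrow> real"
  assumes "0 \<le> (\<Sum>k\<le>p. a k * cos (real k * u))" "0 \<le> (\<Sum>k\<le>p. a k * cos (real k * v))"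
    and "y \<in> {u..v}"
  shows "- (\<Sum>k\<le>p. (real k)\<^sup>2 * \<bar>a k\<bar>) * (v - u)\<^sup>2 / 8 \<le> (\<Sum>k\<le>p. a k * cos (real k * y))"
proof (rule lower_bound_if_second_derivative_le[where g = "\<lambda>x. \<Sum>k\<le>p. a k * cos (real k * x)"])
  show "((\<lambda>x. \<Sum>k\<le>p. a k * cos (real k * x)) has_real_derivative
          (\<Sum>k\<le>p. - (a k * real k * sin (real k * x)))) (at x)" for x
    by (auto intro!: derivative_eq_intros simp: algebra_simps)
  show "((\<lambda>x. \<Sum>k\<le>p. - (a k * real k * sin (real k * x))) has_real_derivative
          (\<Sum>k\<le>p. - (a k * (real k)\<^sup>2 * cos (real k * x)))) (at x)" for x
    by (auto intro!: derivative_eq_intros simp: power2_eq_square algebra_simps)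
  show "(\<Sum>k\<le>p. - (a k * (real k)\<^sup>2 * cos (real k * x))) \<le> (\<Sum>k\<le>p. (real k)\<^sup>2 * \<bar>a k\<bar>)" for x
  proof (rule sum_mono)
    fix k
    have "\<bar>a k * cos (real k * x)\<bar> \<le> \<bar>a k\<bar>"
      by (simp add: abs_mult mult_left_le)
    then show "- (a k * (real k)\<^sup>2 * cos (real k * x)) \<le> (real k)\<^sup>2 * \<bar>a k\<bar>"
      using mult_left_mono[of "- (a k * cos (real k * x))" "\<bar>a k\<bar>" "(real k)\<^sup>2"]
      by (simp add: algebra_simps)
  qed
qed (use assms in \<open>auto intro: sum_nonneg\<close>)

definition cos_poly :: "nat \<Rightarrow> (real \<Rightarrow> real) \<Rightarrow> bool" where
  "cos_poly n f \<longleftrightarrow> (\<exists>a. \<forall>x. f x = (\<Sum>k\<le>n. a k * cos (real k * x)))"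

lemma cos_poly_mono:
  assumes "cos_poly n f" "n \<le> n'"
  shows "cos_poly n' f"
proof -
  obtain a where a: "\<And>x. f x = (\<Sum>k\<le>n. a k * cos (real k * x))"
    using assms(1) unfolding cos_poly_def by blast
  have "f x = (\<Sum>k\<le>n'. (if k \<le> n then a k else 0) * cos (real k * x))" for x
    unfolding a using assms(2) by (intro sum.mono_neutral_cong_left) auto
  then show ?thesis
    unfolding cos_poly_def by (intro exI[of _ "\<lambda>k. if k \<le> n then a k else 0"]) blast
qed

lemma cos_poly_cmult_cos:
  assumes "k \<le> n"
  shows "cos_poly n (\<lambda>x. c * cos (real k * x))"
proof -
  have "(\<Sum>j\<le>n. (if j = k then c else 0) * cos (real j * x))
      = (\<Sum>j\<le>n. if j = k then c * cos (real k * x) else 0)" for x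
    by (rule sum.cong) auto
  then have "c * cos (real k * x) = (\<Sum>j\<le>n. (if j = k then c else 0) * cos (real j * x))" for x
    using assms by simp
  then show ?thesis
    unfolding cos_poly_def by (intro exI[of _ "\<lambda>j. if j = k then c else 0"]) blast
qed

lemma cos_poly_add: "cos_poly n f \<Longrightarrow> cos_poly n g \<Longrightarrow> cos_poly n (\<lambda>x. f x + g x)"
proof -
  assume "cos_poly n f" "cos_poly n g"
  then obtain a b where "\<And>x. f x = (\<Sum>k\<le>n. a k * cos (real k * x))"
    "\<And>x. g x = (\<Sum>k\<le>n. b k * cos (real k * x))"
    unfolding cos_poly_def by blast
  then have "f x + g x = (\<Sum>k\<le>n. (a k + b k) * cos (real k * x))" for x
    by (simp add: sum.distrib distrib_right)
  then show ?thesis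
    unfolding cos_poly_def by (intro exI[of _ "\<lambda>k. a k + b k"]) blast
qed

lemma cos_poly_sum:
  "finite A \<Longrightarrow> (\<And>j. j \<in> A \<Longrightarrow> cos_poly n (f j)) \<Longrightarrow> cos_poly n (\<lambda>x. \<Sum>j\<in>A. f j x)"
proof (induction A rule: finite_induct)
  case empty
  show ?case
    using cos_poly_cmult_cos[of 0 n 0] by simp
next
  case (insert a A)
  then show ?case
    using cos_poly_add[of n "f a" "\<lambda>x. \<Sum>j\<in>A. f j x"] by simp
qed

lemma cos_poly_cos_mult_cmult_cos:
  assumes "k \<le> n"
  shows "cos_poly (Suc n) (\<lambda>x. cos x * (c * cos (real k * x)))"
proof (cases k)
  case 0
  then show ?thesis
    using cos_poly_cmult_cos[of 1 "Suc n" c] by (simp add: mult.commute)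
next
  case (Suc j)
  have "cos_poly (Suc n) (\<lambda>x. c / 2 * cos (real j * x) + c / 2 * cos (real (Suc k) * x))"
    using assms Suc by (intro cos_poly_add cos_poly_cmult_cos) auto
  moreover have "cos x * (c * cos (real k * x)) = c / 2 * cos (real j * x) + c / 2 * cos (real (Suc k) * x)" for x
    using cos_times_cos[of "real k * x" x] Suc by (simp add: algebra_simps add_divide_distrib)
  ultimately show ?thesis
    by simp
qed

lemma cos_poly_cos_mult:
  assumes "cos_poly n f"
  shows "cos_poly (Suc n) (\<lambda>x. cos x * f x)"
proof -
  obtain a where a: "\<And>x. f x = (\<Sum>k\<le>n. a k * cos (real k * x))"
    using assms unfolding cos_poly_def by blast
  have "cos_poly (Suc n) (\<lambda>x. \<Sum>k\<le>n. cos x * (a k * cos (real k * x)))"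
    by (intro cos_poly_sum cos_poly_cos_mult_cmult_cos) auto
  then show ?thesis
    by (simp add: a sum_distrib_left)
qed

lemma cos_poly_poly_cos: "cos_poly (degree s) (\<lambda>x. poly s (cos x))"
proof (induction s)
  case 0
  show ?case
    using cos_poly_cmult_cos[of 0 0 0] by simp
next
  case (pCons c s)
  have "cos_poly (Suc (degree s)) (\<lambda>x. c * cos (real 0 * x) + cos x * poly s (cos x))"
    by (intro cos_poly_add cos_poly_cos_mult pCons.IH cos_poly_cmult_cos) auto
  moreover have "cos_poly 0 (\<lambda>x. c * cos (real 0 * x))"
    by (rule cos_poly_cmult_cos) simp
  ultimately show ?case
    by (cases "s = 0") simp_all
qed

definition trap_weight :: "nat \<Rightarrow> nat \<Rightarrow> real" where
  "trap_weight m i = (if i = 0 \<or> i = m then 1 / 2 else 1)"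

lemma sum_trap_weight_mult:
  assumes "0 < m"
  shows "(\<Sum>i\<le>m. trap_weight m i * c i) = (\<Sum>i\<le>m. c i) - c 0 / 2 - c m / 2"
proof -
  have "trap_weight m i * c i = c i - (if i = 0 then c 0 / 2 else 0) - (if i = m then c m / 2 else 0)" for i
    using assms by (auto simp: trap_weight_def)
  then show ?thesis
    by (simp add: sum_subtractf)
qed

lemma sum_trap_weight: "0 < m \<Longrightarrow> (\<Sum>i\<le>m. trap_weight m i) = real m"
  using sum_trap_weight_mult[of m "\<lambda>_. 1"] by simp

lemma trap_weight_nonneg: "0 \<le> trap_weight m i"
  by (simp add: trap_weight_def)

lemma trap_sum_cos_eq_0:
  assumes "0 < n" "n < 2 * m"
  shows "(\<Sum>i\<le>m. trap_weight m i * cos (real n * (real i * pi / real m))) = 0"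
proof -
  have m: "0 < m"
    using assms by simp
  define h where "h = real n * pi / real m"
  define s where "s = sin (h / 2)"
  have "0 < h / 2" "h / 2 < pi"
    using assms m by (simp_all add: h_def field_simps)
  then have "0 < s"
    unfolding s_def by (rule sin_gt_zero)
  define f where "f i = sin ((real i - 1 / 2) * h)" for i :: nat
  \<comment> \<open>\<open>2 sin (h/2) cos (i h) = sin ((i + 1/2) h) - sin ((i - 1/2) h)\<close>, so the sum telescopes.\<close>
  have telescope: "2 * s * cos (real i * h) = f (Suc i) - f i" for i
    using sin_add[of "real i * h" "h / 2"] sin_diff[of "real i * h" "h / 2"]
    by (simp add: f_def s_def algebra_simps)
  have mh: "real m * h = real n * pi"
    using m by (simp add: h_def)
  have "(\<Sum>i\<le>m. 2 * s * cos (real i * h)) = f (Suc m) - f 0"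
    unfolding telescope lessThan_Suc_atMost[symmetric] by (rule sum_lessThan_telescope)
  also have "f (Suc m) = (-1) ^ n * s"
    using sin_add[of "real n * pi" "h / 2"] mh
    by (simp add: f_def s_def sin_npi cos_npi algebra_simps)
  also have "f 0 = - s"
    by (simp add: f_def s_def)
  finally have sum_cos: "(\<Sum>i\<le>m. 2 * s * cos (real i * h)) = (-1) ^ n * s + s"
    by simp
  have "cos (real m * h) = (-1) ^ n"
    using mh by (simp add: cos_npi)
  then have "2 * s * (\<Sum>i\<le>m. trap_weight m i * cos (real i * h)) = 0"
    using sum_trap_weight_mult[OF m, of "\<lambda>i. 2 * s * cos (real i * h)"] sum_cos
    by (simp add: sum_distrib_left algebra_simps)
  then show ?thesis
    using \<open>0 < s\<close> by (simp add: h_def mult.left_commute)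
qed

lemma trap_sum_cos_nonneg:
  assumes "0 < m" "n \<le> 2 * m"
  shows "0 \<le> (\<Sum>i\<le>m. trap_weight m i * cos (real n * (real i * pi / real m)))"
proof -
  consider "n = 0" | "0 < n \<and> n < 2 * m" | "n = 2 * m"
    using assms by linarith
  then show ?thesis
  proof cases
    case 1
    then show ?thesis
      by (simp add: sum_nonneg trap_weight_nonneg)
  next
    case 2
    then show ?thesis
      using trap_sum_cos_eq_0[of n m] by simp
  next
    case 3
    then have "real n * (real i * pi / real m) = 2 * real i * pi" for i
      using assms by simp
    then have "cos (real n * (real i * pi / real m)) = 1" for i
      by (simp only: cos_2npi)
    then show ?thesis
      by (simp add: sum_nonneg trap_weight_nonneg)
  qed
qed

lemma trap_sum_cos_mult_cos_eq_0:
  assumes "j \<le> m" "k \<le> m" "j \<noteq> k"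
  shows "(\<Sum>i\<le>m. trap_weight m i *
            (cos (real j * (real i * pi / real m)) * cos (real k * (real i * pi / real m)))) = 0"
proof -
  define d where "d = (if k \<le> j then j - k else k - j)"
  have d: "0 < d" "d < 2 * m" and s: "0 < j + k" "j + k < 2 * m"
    using assms by (auto simp: d_def)
  have "cos (real j * x - real k * x) = cos (real d * x)" for x
    using cos_minus[of "real j * x - real k * x"] by (auto simp: d_def of_nat_diff algebra_simps)
  then have product: "cos (real j * x) * cos (real k * x) = (cos (real d * x) + cos (real (j + k) * x)) / 2" for x
    using cos_times_cos[of "real j * x" "real k * x"] by (simp add: algebra_simps)
  show ?thesis
    unfolding product using trap_sum_cos_eq_0[OF d] trap_sum_cos_eq_0[OF s]
    by (simp add: sum.distrib sum_divide_distrib[symmetric] algebra_simps add_divide_distrib)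
qed

lemma trap_sum_cos_sq_ge:
  assumes "0 < m" "k \<le> m"
  shows "real m / 2 \<le> (\<Sum>i\<le>m. trap_weight m i * (cos (real k * (real i * pi / real m)))\<^sup>2)"
proof -
  have square: "(cos (real k * x))\<^sup>2 = (1 + cos (real (2 * k) * x)) / 2" for x
    using cos_double_cos[of "real k * x"] by (simp add: algebra_simps)
  have "0 \<le> (\<Sum>i\<le>m. trap_weight m i * cos (real (2 * k) * (real i * pi / real m)))"
    using assms by (intro trap_sum_cos_nonneg) auto
  then show ?thesis
    unfolding square using sum_trap_weight[OF assms(1)]
    by (simp add: sum.distrib sum_divide_distrib[symmetric] algebra_simps add_divide_distrib)
qed

lemma trap_sum_sq_cos_sum_ge:
  fixes a :: "nat \<Rightarrow> real"
  assumes "0 < m" "p \<le> m"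
  shows "real m / 2 * (\<Sum>k\<le>p. (a k)\<^sup>2)
           \<le> (\<Sum>i\<le>m. trap_weight m i * (\<Sum>k\<le>p. a k * cos (real k * (real i * pi / real m)))\<^sup>2)"
proof -
  define c where "c k i = cos (real k * (real i * pi / real m))" for k i :: nat
  define S where "S j k = (\<Sum>i\<le>m. trap_weight m i * (c j i * c k i))" for j k
  have off_diagonal: "S j k = 0" if "j \<le> p" "k \<le> p" "j \<noteq> k" for j k
    using that assms trap_sum_cos_mult_cos_eq_0[of j m k] by (simp add: S_def c_def)
  have diagonal: "real m / 2 \<le> S k k" if "k \<le> p" for k
    using that assms trap_sum_cos_sq_ge[of m k] by (simp add: S_def c_def power2_eq_square)
  have row: "(\<Sum>k\<le>p. a j * a k * S j k) = (a j)\<^sup>2 * S j j" if "j \<le> p" for j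
  proof -
    have "(\<Sum>k\<le>p. a j * a k * S j k) = (\<Sum>k\<in>{j}. a j * a k * S j k)"
      using that off_diagonal by (intro sum.mono_neutral_right) auto
    then show ?thesis
      by (simp add: power2_eq_square)
  qed
  have "real m / 2 * (\<Sum>k\<le>p. (a k)\<^sup>2) = (\<Sum>j\<le>p. (a j)\<^sup>2 * (real m / 2))"
    by (simp add: sum_distrib_left mult.commute)
  also have "\<dots> \<le> (\<Sum>j\<le>p. (a j)\<^sup>2 * S j j)"
    using diagonal by (intro sum_mono mult_left_mono) auto
  also have "\<dots> = (\<Sum>j\<le>p. \<Sum>k\<le>p. a j * a k * S j k)"
    using row by simp
  also have "\<dots> = (\<Sum>i\<le>m. \<Sum>j\<le>p. \<Sum>k\<le>p. trap_weight m i * (a j * a k * (c j i * c k i)))"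
    unfolding S_def by (simp add: sum.swap[of _ "{..m}"] sum_distrib_left algebra_simps)
  also have "\<dots> = (\<Sum>i\<le>m. trap_weight m i * (\<Sum>k\<le>p. a k * c k i)\<^sup>2)"
    by (simp add: power2_eq_square sum_product sum_distrib_left algebra_simps)
  finally show ?thesis
    unfolding c_def .
qed

lemma sum_sq_cos_coeffs_le:
  fixes a :: "nat \<Rightarrow> real"
  assumes "0 < m" "p \<le> m"
    and bounded: "\<And>i. i \<le> m \<Longrightarrow> \<bar>\<Sum>k\<le>p. a k * cos (real k * (real i * pi / real m))\<bar> \<le> D"
  shows "(\<Sum>k\<le>p. (a k)\<^sup>2) \<le> 2 * D\<^sup>2"
proof -
  have "real m / 2 * (\<Sum>k\<le>p. (a k)\<^sup>2)
      \<le> (\<Sum>i\<le>m. trap_weight m i * (\<Sum>k\<le>p. a k * cos (real k * (real i * pi / real m)))\<^sup>2)"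
    using assms(1,2) by (rule trap_sum_sq_cos_sum_ge)
  also have "\<dots> \<le> (\<Sum>i\<le>m. trap_weight m i * D\<^sup>2)"
    using power_mono[OF bounded abs_ge_zero, of _ 2]
    by (intro sum_mono mult_left_mono trap_weight_nonneg) auto
  also have "\<dots> = real m * D\<^sup>2"
    using sum_trap_weight[OF assms(1)] by (simp add: sum_distrib_right[symmetric])
  finally show ?thesis
    using assms(1) by (simp add: field_simps)
qed

lemma sum_sq_weighted_abs_le:
  fixes a :: "nat \<Rightarrow> real"
  shows "(\<Sum>k\<le>p. (real k)\<^sup>2 * \<bar>a k\<bar>)\<^sup>2 \<le> real p ^ 5 * (\<Sum>k\<le>p. (a k)\<^sup>2)"
proof -
  have "(\<Sum>k\<le>p. (real k)\<^sup>2 * \<bar>a k\<bar>) = (\<Sum>k\<in>{1..p}. (real k)\<^sup>2 * \<bar>a k\<bar>)"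
    by (rule sum.mono_neutral_right) auto
  then have "(\<Sum>k\<le>p. (real k)\<^sup>2 * \<bar>a k\<bar>)\<^sup>2
      \<le> (\<Sum>k\<in>{1..p}. ((real k)\<^sup>2)\<^sup>2) * (\<Sum>k\<in>{1..p}. \<bar>a k\<bar>\<^sup>2)"
    by (simp only: Cauchy_Schwarz_ineq_sum)
  also have "\<dots> \<le> (\<Sum>k\<in>{1..p}. real p ^ 4) * (\<Sum>k\<le>p. (a k)\<^sup>2)"
  proof (rule mult_mono)
    show "(\<Sum>k\<in>{1..p}. ((real k)\<^sup>2)\<^sup>2) \<le> (\<Sum>k\<in>{1..p}. real p ^ 4)"
      by (intro sum_mono) (simp add: power_mono flip: power_mult)
    show "(\<Sum>k\<in>{1..p}. \<bar>a k\<bar>\<^sup>2) \<le> (\<Sum>k\<le>p. (a k)\<^sup>2)"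
      using sum_mono2[of "{..p}" "{1..p}" "\<lambda>k. (a k)\<^sup>2"] by auto
  qed (auto intro: sum_nonneg)
  also have "\<dots> = real p ^ 5 * (\<Sum>k\<le>p. (a k)\<^sup>2)"
    by (simp add: eval_nat_numeral)
  finally show ?thesis .
qed

lemma exists_unit_interval_containing:
  assumes "0 < m" "0 \<le> r" "r \<le> real m"
  shows "\<exists>i<m. real i \<le> r \<and> r \<le> real (Suc i)"
proof (cases "r < real m")
  case True
  then show ?thesis
    using assms(2)
    by (intro exI[of _ "nat \<lfloor>r\<rfloor>"])
      (auto simp: nat_less_iff floor_less_iff, use floor_correct[of r] in linarith)
next
  case False
  then show ?thesis
    using assms by (intro exI[of _ "m - 1"]) (auto simp: of_nat_diff)
qed

lemma cos_sum_lower_bound_from_nodes: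
  fixes a :: "nat \<Rightarrow> real"
  assumes "0 < m" "p \<le> m"
    and nodes: "\<And>i. i \<le> m \<Longrightarrow> 0 \<le> (\<Sum>k\<le>p. a k * cos (real k * (real i * pi / real m)))
                  \<and> (\<Sum>k\<le>p. a k * cos (real k * (real i * pi / real m))) \<le> C"
    and y: "y \<in> {0..pi}"
  shows "- (pi\<^sup>2 * C / 8 * sqrt (real p) * (real p / real m)\<^sup>2) \<le> (\<Sum>k\<le>p. a k * cos (real k * y))"
proof -
  have "0 \<le> C"
    using nodes[of 0] by linarith
  define b where "b = a(0 := a 0 - C / 2)"
  have b_sum: "(\<Sum>k\<le>p. b k * cos (real k * x)) = (\<Sum>k\<le>p. a k * cos (real k * x)) - C / 2" for x
    by (simp add: b_def sum.atMost_shift)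
  have b_sq: "(\<Sum>k\<le>p. (b k)\<^sup>2) \<le> 2 * (C / 2)\<^sup>2"
  proof (rule sum_sq_cos_coeffs_le[OF assms(1,2)])
    fix i assume "i \<le> m"
    then show "\<bar>\<Sum>k\<le>p. b k * cos (real k * (real i * pi / real m))\<bar> \<le> C / 2"
      using nodes[of i] unfolding b_sum abs_le_iff by linarith
  qed
  define M where "M = (\<Sum>k\<le>p. (real k)\<^sup>2 * \<bar>a k\<bar>)"
  have "M = (\<Sum>k\<le>p. (real k)\<^sup>2 * \<bar>b k\<bar>)"
    by (simp add: M_def b_def sum.atMost_shift)
  then have "M\<^sup>2 \<le> real p ^ 5 * (\<Sum>k\<le>p. (b k)\<^sup>2)"
    using sum_sq_weighted_abs_le[of b p] by simp
  also have "\<dots> \<le> real p ^ 5 * (2 * (C / 2)\<^sup>2)"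
    using b_sq by (intro mult_left_mono) auto
  also have "\<dots> = (real p ^ 2 * sqrt (real p) * C)\<^sup>2 / 2"
    by (simp add: power_mult_distrib power_mult[symmetric] eval_nat_numeral)
  also have "\<dots> \<le> (real p ^ 2 * sqrt (real p) * C)\<^sup>2"
    by simp
  finally have M_le: "M \<le> real p ^ 2 * sqrt (real p) * C"
    by (rule power2_le_imp_le) (simp add: \<open>0 \<le> C\<close>)
  have "0 \<le> y * real m / pi" "y * real m / pi \<le> real m"
    using y by (auto simp: field_simps intro: mult_right_mono)
  then obtain i where "i < m" and i: "real i \<le> y * real m / pi" "y * real m / pi \<le> real (Suc i)"
    using exists_unit_interval_containing[OF assms(1)] by blast
  define u where "u = real i * pi / real m"
  define v where "v = real (Suc i) * pi / real m"
  have "y \<in> {u..v}"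
    using i assms(1) by (auto simp: u_def v_def field_simps)
  then have lower: "- M * (v - u)\<^sup>2 / 8 \<le> (\<Sum>k\<le>p. a k * cos (real k * y))"
    unfolding M_def using nodes[of i] nodes[of "Suc i"] \<open>i < m\<close>
    by (intro cos_sum_lower_bound_between) (auto simp: u_def v_def)
  have "v - u = pi / real m"
    by (simp add: u_def v_def add_divide_distrib algebra_simps)
  then have "M * (v - u)\<^sup>2 / 8 \<le> real p ^ 2 * sqrt (real p) * C * (pi / real m)\<^sup>2 / 8"
    using M_le by (simp add: divide_right_mono mult_right_mono)
  moreover have "real p ^ 2 * sqrt (real p) * C * (pi / real m)\<^sup>2 / 8
      = pi\<^sup>2 * C / 8 * sqrt (real p) * (real p / real m)\<^sup>2"
    by (simp add: power_divide field_simps)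
  ultimately show ?thesis
    using lower by linarith
qed

lemma cgl_points_subset:
  assumes "a \<le> b"
  shows "cgl_points a b m \<subseteq> {a..b}"
proof
  fix x assume "x \<in> cgl_points a b m"
  then obtain k where x: "x = (a + b) / 2 + (b - a) / 2 * (- cos (real k * pi / real m))"
    unfolding cgl_points_def by blast
  have "\<bar>(b - a) / 2 * (- cos (real k * pi / real m))\<bar> \<le> (b - a) / 2"
    using assms by (simp add: abs_mult mult_left_le)
  then show "x \<in> {a..b}"
    unfolding x by (auto simp: abs_le_iff field_simps)
qed

lemma poly_lower_bound_from_cgl_points:
  fixes q :: "real poly"
  assumes "a < b" "0 < m" "p \<le> m" "degree q \<le> p"
    and nodes: "\<And>x. x \<in> cgl_points a b m \<Longrightarrow> 0 \<le> poly q x \<and> poly q x \<le> C"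
    and t: "t \<in> {a..b}"
  shows "- (pi\<^sup>2 * C / 8 * sqrt (real p) * (real p / real m)\<^sup>2) \<le> poly q t"
proof -
  define c where "c = (a + b) / 2"
  define h where "h = (b - a) / 2"
  have "0 < h"
    using assms(1) by (simp add: h_def)
  define s where "s = pcompose q [:c, - h:]"
  have poly_s: "poly s y = poly q (c + h * (- y))" for y
    by (simp add: s_def poly_pcompose algebra_simps)
  have "degree s \<le> p"
    using \<open>0 < h\<close> assms(4) by (simp add: s_def degree_pcompose)
  then have "cos_poly p (\<lambda>x. poly s (cos x))"
    using cos_poly_poly_cos cos_poly_mono by blast
  then obtain coeff where coeff: "\<And>x. poly s (cos x) = (\<Sum>k\<le>p. coeff k * cos (real k * x))"
    unfolding cos_poly_def by blast
  have node_mem: "c + h * (- cos (real i * pi / real m)) \<in> cgl_points a b m" if "i \<le> m" for i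
    unfolding cgl_points_def c_def h_def using that by blast
  have coeff_nodes: "0 \<le> (\<Sum>k\<le>p. coeff k * cos (real k * (real i * pi / real m)))
      \<and> (\<Sum>k\<le>p. coeff k * cos (real k * (real i * pi / real m))) \<le> C" if "i \<le> m" for i
    using nodes[OF node_mem[OF that]] coeff[of "real i * pi / real m"] by (simp add: poly_s)
  define y where "y = arccos ((c - t) / h)"
  have bounds: "-1 \<le> (c - t) / h" "(c - t) / h \<le> 1"
    using t \<open>0 < h\<close> by (auto simp: c_def h_def field_simps)
  then have "y \<in> {0..pi}" and "cos y = (c - t) / h"
    using arccos_bounded[OF bounds] cos_arccos[OF bounds] by (auto simp: y_def)
  then have "poly q t = (\<Sum>k\<le>p. coeff k * cos (real k * y))"
    using \<open>0 < h\<close> by (simp flip: coeff add: poly_s)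
  then show ?thesis
    using cos_sum_lower_bound_from_nodes[OF assms(2,3) coeff_nodes \<open>y \<in> {0..pi}\<close>] by simp
qed

theorem mainTheorem5:
  fixes ti ti1 C_box :: real and p m :: nat and phiL phi phiR :: "real poly"
  assumes "ti < ti1"
    and "C_box > 0"
    and "p \<ge> 1"
    and "\<exists>k::nat. k \<ge> 1 \<and> m = k * p"
    and "degree phiL \<le> p" and "degree phi \<le> p" and "degree phiR \<le> p"
    and "\<forall>t \<in> cgl_points ti ti1 m. poly phiL t \<le> poly phi t \<and> poly phi t \<le> poly phiR t"
    and "(SUP t\<in>{ti..ti1}. poly phiR t - poly phiL t) \<le> C_box"
  shows "\<forall>t \<in> {ti..ti1}.
           poly phi t \<ge> poly phiL t - pi\<^sup>2 * C_box / 8 * sqrt (real p) * (real p / real m)\<^sup>2 \<and>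
           poly phi t \<le> poly phiR t + pi\<^sup>2 * C_box / 8 * sqrt (real p) * (real p / real m)\<^sup>2"
proof -
  obtain k where "k \<ge> 1" "m = k * p"
    using assms(4) by blast
  then have "0 < m" "p \<le> m"
    using assms(3) by simp_all
  have "bdd_above ((\<lambda>t. poly phiR t - poly phiL t) ` {ti..ti1})"
    by (intro bounded_imp_bdd_above compact_imp_bounded compact_continuous_image continuous_intros) auto
  then have gap: "poly phiR x - poly phiL x \<le> C_box" if "x \<in> {ti..ti1}" for x
    using cSUP_upper[OF that] assms(9) by fastforce
  have nodes: "0 \<le> poly (phi - phiL) x \<and> poly (phi - phiL) x \<le> C_box"
              "0 \<le> poly (phiR - phi) x \<and> poly (phiR - phi) x \<le> C_box"
    if "x \<in> cgl_points ti ti1 m" for x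
    using assms(8) gap cgl_points_subset[of ti ti1 m] assms(1) that by fastforce+
  have "degree (phi - phiL) \<le> p" "degree (phiR - phi) \<le> p"
    using assms(5-7) degree_diff_le by blast+
  with nodes show ?thesis
    using poly_lower_bound_from_cgl_points[OF assms(1) \<open>0 < m\<close> \<open>p \<le> m\<close>] by fastforce
qed

end
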